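(* Let $(X,Y)$ be a conditionally dependent (CD) random vector with function $s$. Then $s$ is bounded on $D_Y$: there exists $C>0$ such that $s(y)\le C$ for all $y\in D_Y$.
   Context: $X$ is real-valued with distribution $F$ such that $\overline F(x)=1-F(x)>0$ for all $x\in\mathbb{R}$, and $Y$ takes values in $(0,\infty)$ with distribution $G$. Let $D_Y=\{y\in(0,\infty):\mathrm P(Y\in(y-\delta,y+\delta))>0\ \forall\delta>0\}$. For $x\in\mathbb{R}$ and $y\in D_Y$, $\mathrm P(X>x\mid Y=y)=\lim_{t\downarrow0}\mathrm P(X>x,Y\in[y,y+t))/\mathrm P(Y\in[y,y+t))$ when this limit exists. $(X,Y)$ is conditionally dependent (CD) with function $s$ if $s$ is a positive measurable function on $[0,\infty)$ such that these conditional tails exist and $\lim_{x\to\infty}\sup_{y\in D_Y}|\mathrm P(X>x\mid Y=y)/(\overline F(x)s(y))-1|=0$. *)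

theory Defs
  imports "HOL-Probability.Probability"
begin

definition Fbar :: "'a measure \<Rightarrow> ('a \<Rightarrow> real) \<Rightarrow> real \<Rightarrow> real" where
  "Fbar M X x = measure M {\<omega> \<in> space M. X \<omega> > x}"

definition D_Y :: "'a measure \<Rightarrow> ('a \<Rightarrow> real) \<Rightarrow> real set" where
  "D_Y M Y = {y. 0 < y \<and> (\<forall>\<delta>>0. measure M {\<omega> \<in> space M. Y \<omega> \<in> {y - \<delta> <..< y + \<delta>}} > 0)}"

definition cond_ratio :: "'a measure \<Rightarrow> ('a \<Rightarrow> real) \<Rightarrow> ('a \<Rightarrow> real) \<Rightarrow> real \<Rightarrow> real \<Rightarrow> real \<Rightarrow> real" where
  "cond_ratio M X Y x y t =
     measure M {\<omega> \<in> space M. X \<omega> > x \<and> Y \<omega> \<in> {y ..< y + t}}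
     / measure M {\<omega> \<in> space M. Y \<omega> \<in> {y ..< y + t}}"

definition cond_tail_exists :: "'a measure \<Rightarrow> ('a \<Rightarrow> real) \<Rightarrow> ('a \<Rightarrow> real) \<Rightarrow> real \<Rightarrow> real \<Rightarrow> bool" where
  "cond_tail_exists M X Y x y \<longleftrightarrow>
     (\<forall>\<^sub>F t in at_right 0. measure M {\<omega> \<in> space M. Y \<omega> \<in> {y ..< y + t}} > 0) \<and>
     (\<exists>L. (cond_ratio M X Y x y \<longlongrightarrow> L) (at_right 0))"

definition cond_tail :: "'a measure \<Rightarrow> ('a \<Rightarrow> real) \<Rightarrow> ('a \<Rightarrow> real) \<Rightarrow> real \<Rightarrow> real \<Rightarrow> real" where
  "cond_tail M X Y x y = Lim (at_right 0) (cond_ratio M X Y x y)"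

text \<open>(X,Y) is conditionally dependent with function s. The uniform convergence
  sup over D_Y of |...-1| tending to 0 as x tends to infinity is written out with epsilons.\<close>
definition CD :: "'a measure \<Rightarrow> ('a \<Rightarrow> real) \<Rightarrow> ('a \<Rightarrow> real) \<Rightarrow> (real \<Rightarrow> real) \<Rightarrow> bool" where
  "CD M X Y s \<longleftrightarrow>
     s \<in> borel_measurable (restrict_space borel {0..}) \<and> (\<forall>y\<ge>0. s y > 0) \<and>
     (\<forall>x. \<forall>y\<in>D_Y M Y. cond_tail_exists M X Y x y) \<and>
     (\<forall>\<epsilon>>0. \<exists>x0. \<forall>x\<ge>x0. \<forall>y\<in>D_Y M Y.
        \<bar>cond_tail M X Y x y / (Fbar M X x * s y) - 1\<bar> \<le> \<epsilon>)"

end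

theory Submission
  imports Defs
begin

text \<open>Conditional tails are limits of conditional probabilities, hence at most 1. Fixing one
  threshold \<open>x\<^sub>0\<close> at which the CD approximation holds with relative error \<open>1/2\<close> gives
  \<open>Fbar x\<^sub>0 * s y \<le> 2 * P(X > x\<^sub>0 | Y = y) \<le> 2\<close> for every \<open>y \<in> D_Y\<close>, so \<open>C = 2 / Fbar x\<^sub>0\<close> works.\<close>

lemma cond_ratio_le_1:
  assumes "finite_measure M" and "Y \<in> borel_measurable M"
  shows "cond_ratio M X Y x y t \<le> 1"
proof -
  interpret finite_measure M by fact
  let ?joint = "{\<omega> \<in> space M. X \<omega> > x \<and> Y \<omega> \<in> {y ..< y + t}}"
  let ?slab = "{\<omega> \<in> space M. Y \<omega> \<in> {y ..< y + t}}"
  have "?slab \<in> sets M" using assms(2) by measurable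
  then have "measure M ?joint \<le> measure M ?slab"
    by (intro finite_measure_mono) auto
  then show ?thesis
    unfolding cond_ratio_def by (cases "measure M ?slab = 0") (auto simp: divide_le_eq_1 order.strict_iff_order)
qed

lemma cond_tail_le_1:
  assumes "finite_measure M" and "Y \<in> borel_measurable M"
    and "cond_tail_exists M X Y x y"
  shows "cond_tail M X Y x y \<le> 1"
proof -
  obtain L where L: "(cond_ratio M X Y x y \<longlongrightarrow> L) (at_right 0)"
    using assms(3) unfolding cond_tail_exists_def by blast
  then have "cond_tail M X Y x y = L"
    unfolding cond_tail_def by (simp add: tendsto_Lim)
  also have "L \<le> 1"
    using L by (rule tendsto_upperbound) (simp_all add: cond_ratio_le_1[OF assms(1,2)])
  finally show ?thesis .
qed

lemma CD_cond_tail_lower_bound: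
  assumes "CD M X Y s" and "\<And>x. Fbar M X x > 0"
  obtains x0 where "\<And>y. y \<in> D_Y M Y \<Longrightarrow> Fbar M X x0 * s y \<le> 2 * cond_tail M X Y x0 y"
proof -
  obtain x0 where x0: "\<And>y. y \<in> D_Y M Y \<Longrightarrow>
      \<bar>cond_tail M X Y x0 y / (Fbar M X x0 * s y) - 1\<bar> \<le> 1/2"
    using assms(1) unfolding CD_def by (meson half_gt_zero order_refl zero_less_one)
  have "Fbar M X x0 * s y \<le> 2 * cond_tail M X Y x0 y" if y: "y \<in> D_Y M Y" for y
  proof -
    have "s y > 0"
      using assms(1) y unfolding CD_def D_Y_def by auto
    then have "Fbar M X x0 * s y > 0"
      using assms(2) by simp
    moreover have "cond_tail M X Y x0 y / (Fbar M X x0 * s y) \<ge> 1/2"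
      using x0[OF y] by linarith
    ultimately show ?thesis
      by (simp add: le_divide_eq)
  qed
  then show thesis by (rule that)
qed

theorem proposition2p4:
  fixes M :: "'a measure" and X Y :: "'a \<Rightarrow> real" and s :: "real \<Rightarrow> real"
  assumes "prob_space M"
    and "X \<in> borel_measurable M" and "Y \<in> borel_measurable M"
    and "\<And>\<omega>. \<omega> \<in> space M \<Longrightarrow> Y \<omega> > 0"
    and "\<And>x. Fbar M X x > 0"
    and "CD M X Y s"
  shows "\<exists>C>0. \<forall>y\<in>D_Y M Y. s y \<le> C"
proof -
  have finite: "finite_measure M"
    using assms(1) by (simp add: prob_space_def)
  obtain x0 where x0: "\<And>y. y \<in> D_Y M Y \<Longrightarrow> Fbar M X x0 * s y \<le> 2 * cond_tail M X Y x0 y"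
    using CD_cond_tail_lower_bound[OF assms(6,5)] by blast
  have F_pos: "Fbar M X x0 > 0" by (rule assms(5))
  show ?thesis
  proof (intro exI[of _ "2 / Fbar M X x0"] conjI ballI)
    show "0 < 2 / Fbar M X x0" using F_pos by simp
  next
    fix y assume y: "y \<in> D_Y M Y"
    have "cond_tail M X Y x0 y \<le> 1"
      using assms(6) y unfolding CD_def by (blast intro: cond_tail_le_1[OF finite assms(3)])
    with x0[OF y] have "Fbar M X x0 * s y \<le> 2" by linarith
    then show "s y \<le> 2 / Fbar M X x0"
      using F_pos by (simp add: le_divide_eq mult.commute)
  qed
qed

end
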